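(* For every $\epsilon>0$ there is no algorithm (policy) for the DIME problem that guarantees an $n^{-1+\epsilon}$ approximation to $OPT_{full}$. Precisely: for every $\epsilon>0$ and every (possibly randomized) policy for DIME, there exist $n$, an uncertain network on $n$ nodes with parameters $T,K,L$, and a ground-truth network (a realization of the uncertain edges) such that the expected number of influenced nodes at the end of round $T$ obtained by executing the policy when the true network is the ground-truth network is strictly less than $n^{-1+\epsilon}\cdot OPT_{full}$, where $OPT_{full}$ is the maximum expected number of influenced nodes at the end of round $T$ achievable by a policy that knows the ground-truth network.
   Context: An uncertain network is a directed graph $G=(V,E)$ with $|V|=n$, whose edge set is the disjoint union of certain edges $E_c$ and uncertain edges $E_u$; each $e\in E_u$ has an existence probability $u(e)\in[0,1]$ (it exists independently with probability $u(e)$), and each $e\in E$ has a propagation probability $p(e)\in[0,1]$. A ground-truth network is the directed graph obtained by fixing, for each uncertain edge, whether it exists. Influence model: influenced nodes stay influenced forever; at each time step, every influenced node $x$ independently tries to influence each not-yet-influenced out-neighbour $y$ along an existing edge $(x,y)$, succeeding with probability $p(x,y)$; failed attempts are repeated in every subsequent time step. DIME problem: given the uncertain network and integers $T,K,L$, in each of $T$ rounds a policy chooses a set of exactly $K$ nodes, which become influenced with certainty; upon choosing them, the policy observes the true existence of all uncertain edges leaving the chosen nodes; then influence spreads for $L$ time steps according to the influence model (the policy does not observe which nodes get influenced by spread). A policy maps histories (the initial uncertain network, past choices and observations) to the next $K$-node choice. The objective is the expected total number of influenced nodes at the end of round $T$. *)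

theory Defs
  imports "HOL-Probability.Probability"
begin

(* Nodes of an n-node network are 0..<n.  Edges are pairs (x,y) = edge x -> y. *)
record unet =
  nnodes :: nat
  Ec :: "(nat \<times> nat) set"
  Eu :: "(nat \<times> nat) set"
  uprob :: "nat \<times> nat \<Rightarrow> real"       (* existence probability u(e) *)
  pprob :: "nat \<times> nat \<Rightarrow> real"       (* propagation probability p(e) *)

definition wf_unet :: "unet \<Rightarrow> bool" where
  "wf_unet G \<longleftrightarrow>
     Ec G \<union> Eu G \<subseteq> {0..<nnodes G} \<times> {0..<nnodes G} \<and>
     (\<forall>x. (x, x) \<notin> Ec G \<union> Eu G) \<and>
     Ec G \<inter> Eu G = {} \<and>
     (\<forall>e \<in> Eu G. 0 \<le> uprob G e \<and> uprob G e \<le> 1) \<and>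
     (\<forall>e \<in> Ec G \<union> Eu G. 0 \<le> pprob G e \<and> pprob G e \<le> 1)"

record dime_instance =
  net :: unet
  Tr :: nat
  Kn :: nat
  Ls :: nat

definition wf_instance :: "dime_instance \<Rightarrow> bool" where
  "wf_instance I \<longleftrightarrow> wf_unet (net I) \<and> 1 \<le> Tr I \<and> 1 \<le> Kn I \<and> Kn I \<le> nnodes (net I)"

(* A ground-truth network is given by the set R \<subseteq> Eu of uncertain edges that exist;
   we require it to be a realization of positive probability. *)
definition realization :: "unet \<Rightarrow> (nat \<times> nat) set \<Rightarrow> bool" where
  "realization G R \<longleftrightarrow> R \<subseteq> Eu G \<and>
     (\<forall>e \<in> R. uprob G e > 0) \<and> (\<forall>e \<in> Eu G - R. uprob G e < 1)"

definition spread_step :: "(nat \<times> nat) set \<Rightarrow> (nat \<times> nat \<Rightarrow> real) \<Rightarrow> nat set \<Rightarrow> nat set pmf" where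
  "spread_step E p S =
     map_pmf (\<lambda>c. S \<union> {y. \<exists>x \<in> S. c (x, y)})
       (Pi_pmf {(x, y). (x, y) \<in> E \<and> x \<in> S \<and> y \<notin> S} False (\<lambda>e. bernoulli_pmf (p e)))"

fun spread :: "(nat \<times> nat) set \<Rightarrow> (nat \<times> nat \<Rightarrow> real) \<Rightarrow> nat \<Rightarrow> nat set \<Rightarrow> nat set pmf" where
  "spread E p 0 S = return_pmf S"
| "spread E p (Suc l) S = bind_pmf (spread E p l S) (spread_step E p)"

(* History: list of (chosen set, observed set of existing uncertain edges leaving it). *)
type_synonym history = "(nat set \<times> (nat \<times> nat) set) list"

type_synonym policy = "history \<Rightarrow> nat set pmf"

type_synonym dime_policy = "dime_instance \<Rightarrow> policy"

definition valid_policy :: "dime_instance \<Rightarrow> policy \<Rightarrow> bool" where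
  "valid_policy I \<pi> \<longleftrightarrow>
     (\<forall>h. set_pmf (\<pi> h) \<subseteq> {A. A \<subseteq> {0..<nnodes (net I)} \<and> card A = Kn I})"

definition valid_dime_policy :: "dime_policy \<Rightarrow> bool" where
  "valid_dime_policy P \<longleftrightarrow> (\<forall>I. wf_instance I \<longrightarrow> valid_policy I (P I))"

definition dime_round :: "dime_instance \<Rightarrow> (nat \<times> nat) set \<Rightarrow> policy
                          \<Rightarrow> nat set \<times> history \<Rightarrow> (nat set \<times> history) pmf" where
  "dime_round I R \<pi> st =
     (case st of (S, h) \<Rightarrow>
       bind_pmf (\<pi> h) (\<lambda>A.
         map_pmf (\<lambda>S'. (S', h @ [(A, R \<inter> {e \<in> Eu (net I). fst e \<in> A})]))
           (spread (Ec (net I) \<union> R) (pprob (net I)) (Ls I) (S \<union> A))))"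

fun dime_run :: "dime_instance \<Rightarrow> (nat \<times> nat) set \<Rightarrow> policy \<Rightarrow> nat \<Rightarrow> (nat set \<times> history) pmf" where
  "dime_run I R \<pi> 0 = return_pmf ({}, [])"
| "dime_run I R \<pi> (Suc t) = bind_pmf (dime_run I R \<pi> t) (dime_round I R \<pi>)"

definition dime_value :: "dime_instance \<Rightarrow> (nat \<times> nat) set \<Rightarrow> policy \<Rightarrow> real" where
  "dime_value I R \<pi> = measure_pmf.expectation (dime_run I R \<pi> (Tr I)) (\<lambda>st. real (card (fst st)))"

(* OPT_full: best expected value of a policy that knows the ground truth R
   (the policy is chosen with R fixed, hence may depend on R). *)
definition OPT_full :: "dime_instance \<Rightarrow> (nat \<times> nat) set \<Rightarrow> real" where
  "OPT_full I R = (SUP \<pi> \<in> {\<pi>. valid_policy I \<pi>}. dime_value I R \<pi>)"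

end

theory Submission
  imports Defs
begin

text \<open>
  Take n nodes, every ordered pair an uncertain edge with existence probability 1/2 and
  propagation probability 1, and T = K = L = 1. If the ground truth is the star out of a node v,
  seeding v influences all n nodes and seeding any other node influences only itself, so
  OPT_full = n. A policy must commit to its seed before observing anything, so it seeds some
  v with probability at most 1/n; against the star out of that v its expected value is at
  most 2, which is below n^(\<epsilon>-1) \<cdot> n once n^\<epsilon> > 2.
\<close>

lemma bernoulli_pmf_1: "bernoulli_pmf 1 = return_pmf True"
  by (rule pmf_eqI) (simp add: indicator_def)

lemma spread_step_certain:
  assumes "finite E" and "\<And>e. e \<in> E \<Longrightarrow> p e = 1"
  shows "spread_step E p S = return_pmf (S \<union> E `` S)"
proof -
  let ?D = "{(x, y). (x, y) \<in> E \<and> x \<in> S \<and> y \<notin> S}"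
  have "finite ?D" by (rule finite_subset[OF _ assms(1)]) auto
  moreover have "Pi_pmf ?D False (\<lambda>e. bernoulli_pmf (p e)) = Pi_pmf ?D False (\<lambda>_. return_pmf True)"
    using assms(2) by (intro Pi_pmf_cong) (auto simp: bernoulli_pmf_1)
  moreover have "S \<union> {y. \<exists>x \<in> S. (x, y) \<in> ?D} = S \<union> E `` S" by auto
  ultimately show ?thesis by (simp add: spread_step_def)
qed

lemma dime_run_single_round_certain:
  assumes "Tr I = 1" and "Ls I = 1" and "finite (Ec (net I) \<union> R)"
    and "\<And>e. e \<in> Ec (net I) \<union> R \<Longrightarrow> pprob (net I) e = 1"
  shows "dime_run I R \<pi> (Tr I) =
    map_pmf (\<lambda>A. (A \<union> (Ec (net I) \<union> R) `` A, [(A, R \<inter> {e \<in> Eu (net I). fst e \<in> A})])) (\<pi> [])"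
proof -
  have "spread_step (Ec (net I) \<union> R) (pprob (net I)) A = return_pmf (A \<union> (Ec (net I) \<union> R) `` A)" for A
    using assms(3,4) by (rule spread_step_certain)
  then show ?thesis
    using assms(1,2) by (simp add: dime_round_def bind_return_pmf map_pmf_def)
qed

lemma dime_value_single_round_certain:
  assumes "Tr I = 1" and "Ls I = 1" and "finite (Ec (net I) \<union> R)"
    and "\<And>e. e \<in> Ec (net I) \<union> R \<Longrightarrow> pprob (net I) e = 1"
  shows "dime_value I R \<pi> = measure_pmf.expectation (\<pi> []) (\<lambda>A. real (card (A \<union> (Ec (net I) \<union> R) `` A)))"
  using assms unfolding dime_value_def by (subst dime_run_single_round_certain) auto

lemma ex_pmf_le_inverse_card:
  fixes M :: "'a pmf"
  assumes "finite X" and "X \<noteq> {}"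
  shows "\<exists>x\<in>X. pmf M x \<le> 1 / real (card X)"
proof (rule ccontr)
  assume "\<not> ?thesis"
  then have "(\<Sum>x\<in>X. 1 / real (card X)) < (\<Sum>x\<in>X. pmf M x)"
    using assms by (intro sum_strict_mono) auto
  also have "\<dots> = measure_pmf.prob M X"
    using assms(1) by (simp add: measure_measure_pmf_finite)
  also have "\<dots> \<le> 1" by simp
  finally show False using assms by simp
qed

lemma ex_nat_powr_gt:
  fixes c \<epsilon> :: real
  assumes "\<epsilon> > 0"
  shows "\<exists>n::nat. 0 < n \<and> c < real n powr \<epsilon>"
proof -
  define n where "n = nat \<lceil>\<bar>c\<bar> powr (1 / \<epsilon>)\<rceil> + 1"
  have "\<bar>c\<bar> powr (1 / \<epsilon>) < real n" unfolding n_def by linarith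
  then have "(\<bar>c\<bar> powr (1 / \<epsilon>)) powr \<epsilon> < real n powr \<epsilon>"
    using assms by (intro powr_less_mono2) auto
  then have "\<bar>c\<bar> < real n powr \<epsilon>"
    using assms by (simp add: powr_powr)
  then show ?thesis by (intro exI[of _ n]) (auto simp: n_def)
qed

definition hidden_star :: "nat \<Rightarrow> dime_instance" where
  "hidden_star n = \<lparr>net = \<lparr>nnodes = n, Ec = {}, Eu = {(x, y). x < n \<and> y < n \<and> x \<noteq> y},
     uprob = (\<lambda>_. 1 / 2), pprob = (\<lambda>_. 1)\<rparr>, Tr = 1, Kn = 1, Ls = 1\<rparr>"

definition star_edges :: "nat \<Rightarrow> nat \<Rightarrow> (nat \<times> nat) set" where
  "star_edges n v = {v} \<times> ({0..<n} - {v})"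

lemma wf_instance_hidden_star: "0 < n \<Longrightarrow> wf_instance (hidden_star n)"
  by (auto simp: wf_instance_def wf_unet_def hidden_star_def)

lemma realization_star_edges: "v < n \<Longrightarrow> realization (net (hidden_star n)) (star_edges n v)"
  by (auto simp: realization_def hidden_star_def star_edges_def)

lemma valid_policy_hidden_star_choice:
  assumes "valid_policy (hidden_star n) \<pi>" and "A \<in> set_pmf (\<pi> h)"
  obtains w where "w < n" and "A = {w}"
  using assms by (force simp: valid_policy_def hidden_star_def card_1_singleton_iff)

lemma card_star_closure_singleton:
  assumes "w < n" and "v < n"
  shows "card ({w} \<union> star_edges n v `` {w}) = (if w = v then n else 1)"
proof -
  have "{w} \<union> star_edges n v `` {w} = (if w = v then {0..<n} else {w})"
    using assms by (auto simp: star_edges_def)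
  then show ?thesis by simp
qed

lemma dime_value_hidden_star:
  assumes "valid_policy (hidden_star n) \<pi>" and "v < n"
  shows "dime_value (hidden_star n) (star_edges n v) \<pi> = 1 + (real n - 1) * pmf (\<pi> []) {v}"
proof -
  let ?M = "measure_pmf (\<pi> [])"
  have "finite (star_edges n v)" by (simp add: star_edges_def)
  then have "dime_value (hidden_star n) (star_edges n v) \<pi> =
      measure_pmf.expectation (\<pi> []) (\<lambda>A. real (card (A \<union> star_edges n v `` A)))"
    by (subst dime_value_single_round_certain) (auto simp: hidden_star_def)
  also have "\<dots> = measure_pmf.expectation (\<pi> []) (\<lambda>A. 1 + (real n - 1) * indicator {{v}} A)"
  proof (rule integral_cong_AE)
    show "AE A in ?M. real (card (A \<union> star_edges n v `` A)) = 1 + (real n - 1) * indicator {{v}} A"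
    proof (rule AE_pmfI)
      fix A assume "A \<in> set_pmf (\<pi> [])"
      with assms(1) obtain w where "w < n" "A = {w}"
        by (rule valid_policy_hidden_star_choice)
      then show "real (card (A \<union> star_edges n v `` A)) = 1 + (real n - 1) * indicator {{v}} A"
        using assms(2) card_star_closure_singleton[of w n v] by (auto simp: indicator_def)
    qed
  qed simp_all
  also have "\<dots> = 1 + (real n - 1) * pmf (\<pi> []) {v}"
    by (subst Bochner_Integration.integral_add) (auto simp: measure_pmf_single less_top[symmetric])
  finally show ?thesis .
qed

lemma OPT_full_hidden_star_ge:
  assumes "v < n"
  shows "real n \<le> OPT_full (hidden_star n) (star_edges n v)"
proof -
  let ?value = "dime_value (hidden_star n) (star_edges n v)"
  define \<pi>\<^sub>v :: policy where "\<pi>\<^sub>v = (\<lambda>_. return_pmf {v})"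
  have valid: "valid_policy (hidden_star n) \<pi>\<^sub>v"
    using assms by (simp add: valid_policy_def \<pi>\<^sub>v_def hidden_star_def)
  have bdd: "bdd_above (?value ` {\<pi>. valid_policy (hidden_star n) \<pi>})"
  proof (rule bdd_aboveI2)
    fix \<pi> assume "\<pi> \<in> {\<pi>. valid_policy (hidden_star n) \<pi>}"
    then have "?value \<pi> = 1 + (real n - 1) * pmf (\<pi> []) {v}"
      using assms by (simp add: dime_value_hidden_star)
    also have "\<dots> \<le> 1 + (real n - 1) * 1"
      using assms by (intro add_left_mono mult_left_mono pmf_le_1) auto
    finally show "?value \<pi> \<le> real n" by simp
  qed
  have "?value \<pi>\<^sub>v = real n"
    using dime_value_hidden_star[OF valid assms] by (simp add: \<pi>\<^sub>v_def)
  then show ?thesis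
    unfolding OPT_full_def using cSUP_upper[OF _ bdd, of \<pi>\<^sub>v] valid by simp
qed

theorem theorem1:
  fixes \<epsilon> :: real and P :: dime_policy
  assumes "\<epsilon> > 0" and "valid_dime_policy P"
  shows "\<exists>I R. wf_instance I \<and> realization (net I) R \<and>
           dime_value I R (P I) < real (nnodes (net I)) powr (\<epsilon> - 1) * OPT_full I R"
proof -
  obtain n :: nat where n: "0 < n" and n_large: "2 < real n powr \<epsilon>"
    using ex_nat_powr_gt[OF assms(1)] by blast
  let ?I = "hidden_star n"
  have wf: "wf_instance ?I"
    using n by (rule wf_instance_hidden_star)
  then have valid: "valid_policy ?I (P ?I)"
    using assms(2) by (simp add: valid_dime_policy_def)
  have "card ((\<lambda>v. {v}) ` {0..<n}) = n"
    by (simp add: card_image)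
  then obtain v where v: "v < n" and rare: "pmf (P ?I []) {v} \<le> 1 / real n"
    using ex_pmf_le_inverse_card[of "(\<lambda>v. {v}) ` {0..<n}" "P ?I []"] n by auto
  have "dime_value ?I (star_edges n v) (P ?I) = 1 + (real n - 1) * pmf (P ?I []) {v}"
    using valid v by (rule dime_value_hidden_star)
  also have "\<dots> \<le> 1 + real n * (1 / real n)"
    using rare by (intro add_left_mono mult_mono) auto
  also have "\<dots> < real n powr \<epsilon>"
    using n n_large by simp
  also have "\<dots> = real n powr (\<epsilon> - 1) * real n"
    using n by (simp add: powr_diff)
  also have "\<dots> \<le> real n powr (\<epsilon> - 1) * OPT_full ?I (star_edges n v)"
    using OPT_full_hidden_star_ge[OF v] by (intro mult_left_mono) auto
  finally show ?thesis
    using wf realization_star_edges[OF v] by (intro exI[of _ ?I] exI[of _ "star_edges n v"]) (simp add: hidden_star_def)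
qed

end
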